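(* Let $\varepsilon>0$, $u\in\mathcal{SF}_\varepsilon$, and let $T^{\rm pos},T^{\rm neg}\in\mathcal{T}_\varepsilon(\mathbb{R}^2)$ be two triangles sharing a side (i.e. $\mathcal{H}^1(T^{\rm pos}\cap T^{\rm neg})=\varepsilon$) such that $\chi(u,T^{\rm pos})\ge0$ and $\chi(u,T^{\rm neg})\le0$. Then $F_\varepsilon(u,T^{\rm pos}\cup T^{\rm neg})\ge\tfrac53\varepsilon$.
   Context: Let $\hat e_1=(1,0)$, $\hat e_2=\tfrac12(1,\sqrt3)$, $\hat e_3=\tfrac12(-1,\sqrt3)$ and $\mathcal{L}=\{z_1\hat e_1+z_2\hat e_2\colon z_1,z_2\in\mathbb{Z}\}$, with sublattices $\mathcal{L}^1=\{z_1(\hat e_1+\hat e_2)+z_2(\hat e_2+\hat e_3)\colon z\in\mathbb{Z}^2\}$, $\mathcal{L}^2=\mathcal{L}^1+\hat e_1$, $\mathcal{L}^3=\mathcal{L}^1+\hat e_2$. $\mathcal{T}(\mathbb{R}^2)$ is the set of closed triangles $\mathrm{conv}\{i,j,k\}$, $i,j,k\in\mathcal L$ pairwise at distance 1; each has one vertex in each sublattice, labelled $i\in\mathcal{L}^1,j\in\mathcal{L}^2,k\in\mathcal{L}^3$. $\mathcal{L}_\varepsilon=\varepsilon\mathcal{L}$, $\mathcal{T}_\varepsilon(\mathbb{R}^2)=\varepsilon\mathcal{T}(\mathbb{R}^2)$, $\mathcal{T}_\varepsilon(A)=\{T\in\mathcal{T}_\varepsilon(\mathbb{R}^2)\colon T\subset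 A\}$. $\mathcal{SF}_\varepsilon=\{u\colon\mathcal{L}_\varepsilon\to\mathcal{S}^1\}$. $F_\varepsilon(u,T)=\varepsilon|u(\varepsilon i)+u(\varepsilon j)+u(\varepsilon k)|^2$ for $T=\mathrm{conv}\{\varepsilon i,\varepsilon j,\varepsilon k\}$, and $F_\varepsilon(u,A)=\sum_{T\in\mathcal{T}_\varepsilon(A)}F_\varepsilon(u,T)$. With $v\times w=v_1w_2-v_2w_1$, the chirality is $\chi(u,T)=\frac{2}{3\sqrt3}\big(u(\varepsilon i)\times u(\varepsilon j)+u(\varepsilon j)\times u(\varepsilon k)+u(\varepsilon k)\times u(\varepsilon i)\big)$. *)

theory Defs
  imports "HOL-Analysis.Analysis"
begin

text \<open>The plane is modelled by the complex numbers (as a real vector space);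
  spin values in S^1 are unit complex numbers.\<close>

definition e1 :: complex where "e1 = Complex 1 0"
definition e2 :: complex where "e2 = Complex (1/2) (sqrt 3 / 2)"
definition e3 :: complex where "e3 = Complex (-1/2) (sqrt 3 / 2)"

definition Lat :: "complex set" where
  "Lat = {of_int z1 * e1 + of_int z2 * e2 | z1 z2 :: int. True}"

definition Lat1 :: "complex set" where
  "Lat1 = {of_int z1 * (e1 + e2) + of_int z2 * (e2 + e3) | z1 z2 :: int. True}"

definition Lat2 :: "complex set" where
  "Lat2 = (\<lambda>x. x + e1) ` Lat1"

definition Lat3 :: "complex set" where
  "Lat3 = (\<lambda>x. x + e2) ` Lat1"

text \<open>Triangles of T(R^2), represented by their labelled vertices (i,j,k) with
  i in Lat1, j in Lat2, k in Lat3, pairwise at distance 1 (the labelling is unique).\<close>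
definition tris :: "(complex \<times> complex \<times> complex) set" where
  "tris = {(i, j, k). i \<in> Lat1 \<and> j \<in> Lat2 \<and> k \<in> Lat3 \<and>
                      dist i j = 1 \<and> dist j k = 1 \<and> dist k i = 1}"

definition tri_hull :: "real \<Rightarrow> complex \<times> complex \<times> complex \<Rightarrow> complex set" where
  "tri_hull \<epsilon> t = (case t of (i, j, k) \<Rightarrow> convex hull {\<epsilon> *\<^sub>R i, \<epsilon> *\<^sub>R j, \<epsilon> *\<^sub>R k})"

definition SF :: "real \<Rightarrow> (complex \<Rightarrow> complex) set" where
  "SF \<epsilon> = {u. \<forall>x \<in> (\<lambda>p. \<epsilon> *\<^sub>R p) ` Lat. norm (u x) = 1}"

definition cross :: "complex \<Rightarrow> complex \<Rightarrow> real" where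
  "cross v w = Re v * Im w - Im v * Re w"

definition chi :: "real \<Rightarrow> (complex \<Rightarrow> complex) \<Rightarrow> complex \<times> complex \<times> complex \<Rightarrow> real" where
  "chi \<epsilon> u t = (case t of (i, j, k) \<Rightarrow>
     2 / (3 * sqrt 3) * (cross (u (\<epsilon> *\<^sub>R i)) (u (\<epsilon> *\<^sub>R j))
                       + cross (u (\<epsilon> *\<^sub>R j)) (u (\<epsilon> *\<^sub>R k))
                       + cross (u (\<epsilon> *\<^sub>R k)) (u (\<epsilon> *\<^sub>R i))))"

definition Ftri :: "real \<Rightarrow> (complex \<Rightarrow> complex) \<Rightarrow> complex \<times> complex \<times> complex \<Rightarrow> real" where
  "Ftri \<epsilon> u t = (case t of (i, j, k) \<Rightarrow>
     \<epsilon> * (norm (u (\<epsilon> *\<^sub>R i) + u (\<epsilon> *\<^sub>R j) + u (\<epsilon> *\<^sub>R k)))\<^sup>2)"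

definition F :: "real \<Rightarrow> (complex \<Rightarrow> complex) \<Rightarrow> complex set \<Rightarrow> real" where
  "F \<epsilon> u A = (\<Sum>t \<in> {t \<in> tris. tri_hull \<epsilon> t \<subseteq> A}. Ftri \<epsilon> u t)"

text \<open>Two triangles share a side: their intersection is a segment of length eps
  (equivalently H^1 of the intersection equals eps).\<close>
definition share_side :: "real \<Rightarrow> complex \<times> complex \<times> complex \<Rightarrow> complex \<times> complex \<times> complex \<Rightarrow> bool" where
  "share_side \<epsilon> s t = (\<exists>a b. tri_hull \<epsilon> s \<inter> tri_hull \<epsilon> t = closed_segment a b \<and> dist a b = \<epsilon>)"

end

theory Submission
  imports Defs
begin

(*
  Two triangles sharing a side have two vertices in common, and since every vertex
  belongs to the sublattice of its label, the common vertices sit at the same positions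
  of both labelled triples. Let x, y be the spins on the common side, c, d those at the
  opposite vertices, and put s = x + y, w = y - x, which are orthogonal. The chirality
  of (x, y, c) is a positive multiple of cross(w, c - x), and the identity
  |s|^2 cross(w, c - x) = cross(w, s) (<s, c> - |s|^2 / 2) turns the opposite signs of
  the two chiralities into <s, c> >= |s|^2 / 2 or <s, d> >= |s|^2 / 2, unless
  cross(w, s) = 0, which forces s = 0 (so <s, c> = 0 anyway) or |s| = 2. If
  <s, c> >= |s|^2 / 2, the energy is at least
  (2 |s|^2 + 1) + (|s| - 1)^2 = 3 |s|^2 - 2 |s| + 2 >= 5/3; if |s| = 2, both terms are
  at least 1.
*)

lemma e3_eq: "e3 = e2 - e1"
  by (simp add: e1_def e2_def e3_def complex_eq_iff)

lemma shifted_Lat1_point_in_Lat: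
  "of_int a * (e1 + e2) + of_int b * (e2 + e3) + of_int m * e1 + of_int n * e2 \<in> Lat"
proof -
  have "of_int a * (e1 + e2) + of_int b * (e2 + e3) + of_int m * e1 + of_int n * e2
      = of_int (a - b + m) * e1 + of_int (a + 2 * b + n) * e2"
    by (simp add: e3_eq algebra_simps)
  then show ?thesis
    unfolding Lat_def by blast
qed

lemma sublattices_subset_Lat: "Lat1 \<subseteq> Lat" "Lat2 \<subseteq> Lat" "Lat3 \<subseteq> Lat"
  using shifted_Lat1_point_in_Lat[where m = 0 and n = 0]
    shifted_Lat1_point_in_Lat[where m = 1 and n = 0]
    shifted_Lat1_point_in_Lat[where m = 0 and n = 1]
  by (auto simp: Lat1_def Lat2_def Lat3_def)

lemma two_Re_shifted_Lat1_point:
  "2 * Re (of_int a * (e1 + e2) + of_int b * (e2 + e3) + of_int m * e1 + of_int n * e2)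
    = of_int (3 * a + 2 * m + n)"
  by (simp add: e1_def e2_def e3_def)

lemma Re_sublattices:
  "x \<in> Lat1 \<Longrightarrow> \<exists>a::int. 2 * Re x = of_int (3 * a)"
  "x \<in> Lat2 \<Longrightarrow> \<exists>a::int. 2 * Re x = of_int (3 * a + 2)"
  "x \<in> Lat3 \<Longrightarrow> \<exists>a::int. 2 * Re x = of_int (3 * a + 1)"
  using two_Re_shifted_Lat1_point[where m = 0 and n = 0]
    two_Re_shifted_Lat1_point[where m = 1 and n = 0]
    two_Re_shifted_Lat1_point[where m = 0 and n = 1]
  by (auto simp: Lat1_def Lat2_def Lat3_def)

lemma sublattices_disjoint: "Lat1 \<inter> Lat2 = {}" "Lat1 \<inter> Lat3 = {}" "Lat2 \<inter> Lat3 = {}"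
proof -
  have "3 * a \<noteq> 3 * b + 2" "3 * a \<noteq> 3 * b + 1" "3 * a + 2 \<noteq> 3 * b + 1" for a b :: int
    by presburger+
  then show "Lat1 \<inter> Lat2 = {}" "Lat1 \<inter> Lat3 = {}" "Lat2 \<inter> Lat3 = {}"
    using Re_sublattices by (metis disjoint_iff of_int_eq_iff)+
qed

lemma finite_Lat_norm_le: "finite {z \<in> Lat. norm z \<le> M}"
proof -
  define N where "N = \<lceil>2 * M\<rceil>"
  have "{z \<in> Lat. norm z \<le> M} \<subseteq> (\<lambda>(z1, z2). of_int z1 * e1 + of_int z2 * e2) ` ({-N..N} \<times> {-N..N})"
  proof
    fix z assume z: "z \<in> {z \<in> Lat. norm z \<le> M}"
    then obtain z1 z2 :: int where z_eq: "z = of_int z1 * e1 + of_int z2 * e2"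
      unfolding Lat_def by blast
    have Re_z: "Re z = of_int z1 + of_int z2 / 2" and Im_z: "Im z = of_int z2 * (sqrt 3 / 2)"
      by (simp_all add: z_eq e1_def e2_def)
    have "\<bar>Re z\<bar> \<le> M" "\<bar>Im z\<bar> \<le> M"
      using z abs_Re_le_cmod[of z] abs_Im_le_cmod[of z] by auto
    moreover have "\<bar>of_int z2\<bar> / 2 \<le> \<bar>of_int z2\<bar> * (sqrt 3 / 2)"
      by (simp add: mult_le_cancel_left1)
    ultimately have "\<bar>real_of_int z1\<bar> \<le> of_int N" "\<bar>real_of_int z2\<bar> \<le> of_int N"
      unfolding Re_z Im_z N_def by (auto simp: abs_mult) linarith+
    then have "(z1, z2) \<in> {-N..N} \<times> {-N..N}"
      by (auto simp only: of_int_abs[symmetric] of_int_le_iff abs_le_iff atLeastAtMost_iff mem_Sigma_iff)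
    then show "z \<in> (\<lambda>(z1, z2). of_int z1 * e1 + of_int z2 * e2) ` ({-N..N} \<times> {-N..N})"
      unfolding z_eq by force
  qed
  then show ?thesis
    by (rule finite_subset) auto
qed

lemma finite_tris_in_bounded:
  assumes "\<epsilon> > 0" "bounded A"
  shows "finite {t \<in> tris. tri_hull \<epsilon> t \<subseteq> A}"
proof -
  obtain R where R: "\<And>x. x \<in> A \<Longrightarrow> norm x \<le> R"
    using assms(2) unfolding bounded_iff by blast
  define B where "B = {z \<in> Lat. norm z \<le> R / \<epsilon>}"
  have B_mem: "x \<in> B" if "x \<in> Lat" "\<epsilon> *\<^sub>R x \<in> A" for x
    using R[OF that(2)] that(1) assms(1) by (simp add: B_def pos_le_divide_eq mult.commute)
  have "{t \<in> tris. tri_hull \<epsilon> t \<subseteq> A} \<subseteq> B \<times> B \<times> B"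
  proof safe
    fix i j k assume "(i, j, k) \<in> tris" "tri_hull \<epsilon> (i, j, k) \<subseteq> A"
    moreover have "{\<epsilon> *\<^sub>R i, \<epsilon> *\<^sub>R j, \<epsilon> *\<^sub>R k} \<subseteq> tri_hull \<epsilon> (i, j, k)"
      unfolding tri_hull_def by (simp add: hull_subset)
    ultimately show "i \<in> B" "j \<in> B" "k \<in> B"
      using sublattices_subset_Lat by (auto simp: tris_def intro!: B_mem)
  qed
  moreover have "finite B"
    unfolding B_def by (rule finite_Lat_norm_le)
  ultimately show ?thesis
    by (simp add: finite_subset)
qed

lemma bounded_tri_hull: "bounded (tri_hull \<epsilon> t)"
  by (cases t) (simp add: tri_hull_def bounded_convex_hull finite_imp_bounded)

lemma sum_Ftri_le_F:
  assumes "\<epsilon> > 0" "bounded A" "S \<subseteq> {t \<in> tris. tri_hull \<epsilon> t \<subseteq> A}"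
  shows "(\<Sum>t\<in>S. Ftri \<epsilon> u t) \<le> F \<epsilon> u A"
  unfolding F_def
proof (rule sum_mono2[OF finite_tris_in_bounded[OF assms(1,2)] assms(3)])
  show "0 \<le> Ftri \<epsilon> u t" for t
    using assms(1) by (cases t) (simp add: Ftri_def)
qed

text \<open>For \<open>Q\<close> the left-hand side of the last hypothesis,
  \<open>2 - 2 Q = \<Sum> a\<^sub>i (1 - a\<^sub>i) + \<Sum> b\<^sub>i (1 - b\<^sub>i) + 2 \<Sum> a\<^sub>i b\<^sub>i\<close> is a sum of nonnegative
  terms, so \<open>Q = 1\<close> forces every \<open>a\<^sub>i\<close> into \<open>{0, 1}\<close>.\<close>
lemma barycentric_vertex_if_gap_eq_1:
  fixes a1 a2 a3 b1 b2 b3 :: real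
  assumes "a1 \<ge> 0" "a2 \<ge> 0" "a3 \<ge> 0" "a1 + a2 + a3 = 1"
    and "b1 \<ge> 0" "b2 \<ge> 0" "b3 \<ge> 0" "b1 + b2 + b3 = 1"
    and "(a1 - b1)\<^sup>2 + (a2 - b2)\<^sup>2 + (a1 - b1) * (a2 - b2) = 1"
  shows "(a1, a2, a3) \<in> {(1, 0, 0), (0, 1, 0), (0, 0, 1)}"
proof -
  have "a1 * (1 - a1) + a2 * (1 - a2) + a3 * (1 - a3) + (b1 * (1 - b1) + b2 * (1 - b2) + b3 * (1 - b3))
      + 2 * (a1 * b1 + a2 * b2 + a3 * b3) = 0"
    using assms(4,8,9) by algebra
  moreover have "a1 * (1 - a1) \<ge> 0" "a2 * (1 - a2) \<ge> 0" "a3 * (1 - a3) \<ge> 0"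
    "b1 * (1 - b1) \<ge> 0" "b2 * (1 - b2) \<ge> 0" "b3 * (1 - b3) \<ge> 0"
    "a1 * b1 \<ge> 0" "a2 * b2 \<ge> 0" "a3 * b3 \<ge> 0"
    using assms by simp_all
  ultimately have "a1 * (1 - a1) = 0" "a2 * (1 - a2) = 0" "a3 * (1 - a3) = 0"
    by (smt (verit))+
  then show ?thesis
    using assms(4) by auto
qed

lemma far_point_of_equilateral_hull_is_vertex:
  fixes p q r a b :: "'a::real_inner"
  assumes "dist p q = e" "dist q r = e" "dist r p = e" "e > 0"
    and "a \<in> convex hull {p, q, r}" "b \<in> convex hull {p, q, r}" "dist a b = e"
  shows "a \<in> {p, q, r}"
proof -
  obtain a1 a2 a3 where a: "a = a1 *\<^sub>R p + a2 *\<^sub>R q + a3 *\<^sub>R r"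
    and a_coords: "a1 \<ge> 0" "a2 \<ge> 0" "a3 \<ge> 0" "a1 + a2 + a3 = 1"
    using assms(5) unfolding convex_hull_3 by blast
  obtain b1 b2 b3 where b: "b = b1 *\<^sub>R p + b2 *\<^sub>R q + b3 *\<^sub>R r"
    and b_coords: "b1 \<ge> 0" "b2 \<ge> 0" "b3 \<ge> 0" "b1 + b2 + b3 = 1"
    using assms(6) unfolding convex_hull_3 by blast
  define U V where "U = p - r" and "V = q - r"
  have a3: "a3 = 1 - a1 - a2" and b3: "b3 = 1 - b1 - b2"
    using a_coords(4) b_coords(4) by linarith+
  have a_minus_b: "a - b = (a1 - b1) *\<^sub>R U + (a2 - b2) *\<^sub>R V"
    unfolding a b a3 b3 U_def V_def by (simp add: algebra_simps)
  have norms: "norm U = e" "norm V = e" "norm (U - V) = e"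
    using assms(1-3) by (simp_all add: U_def V_def dist_norm norm_minus_commute)
  then have inner_UV: "2 * inner U V = e\<^sup>2"
    by (simp add: dot_norm_neg)
  have "e\<^sup>2 = (norm ((a1 - b1) *\<^sub>R U + (a2 - b2) *\<^sub>R V))\<^sup>2"
    using assms(7) by (simp add: dist_norm a_minus_b)
  also have "\<dots> = (a1 - b1)\<^sup>2 * (norm U)\<^sup>2 + (a2 - b2)\<^sup>2 * (norm V)\<^sup>2
      + (a1 - b1) * (a2 - b2) * (2 * inner U V)"
    unfolding power2_norm_eq_inner
    by (simp add: inner_add_left inner_add_right inner_commute power2_eq_square algebra_simps)
  also have "\<dots> = e\<^sup>2 * ((a1 - b1)\<^sup>2 + (a2 - b2)\<^sup>2 + (a1 - b1) * (a2 - b2))"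
    unfolding norms inner_UV by (simp add: algebra_simps)
  finally have "(a1 - b1)\<^sup>2 + (a2 - b2)\<^sup>2 + (a1 - b1) * (a2 - b2) = 1"
    using assms(4) by simp
  from barycentric_vertex_if_gap_eq_1[OF a_coords b_coords this]
  show ?thesis
    unfolding a by auto
qed

lemma closed_segment_equilateral_triple_imp_eq:
  fixes a b x y z :: "'a::real_normed_vector"
  assumes "x \<in> closed_segment a b" "y \<in> closed_segment a b" "z \<in> closed_segment a b"
    and "dist x y = dist a b" "dist y z = dist a b" "dist z x = dist a b"
  shows "a = b"
proof (rule ccontr)
  assume "a \<noteq> b"
  have dist_param: "dist ((1 - s) *\<^sub>R a + s *\<^sub>R b) ((1 - t) *\<^sub>R a + t *\<^sub>R b) = \<bar>s - t\<bar> * dist a b"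
    for s t :: real
  proof -
    have "(1 - s) *\<^sub>R a + s *\<^sub>R b - ((1 - t) *\<^sub>R a + t *\<^sub>R b) = (s - t) *\<^sub>R (b - a)"
      by (simp add: algebra_simps)
    then show ?thesis
      by (simp add: dist_norm norm_minus_commute)
  qed
  obtain s t v where params: "s \<in> {0..1}" "t \<in> {0..1}" "v \<in> {0..1}"
    and points: "x = (1 - s) *\<^sub>R a + s *\<^sub>R b" "y = (1 - t) *\<^sub>R a + t *\<^sub>R b" "z = (1 - v) *\<^sub>R a + v *\<^sub>R b"
    using assms(1-3) unfolding closed_segment_def by auto
  have "\<bar>s - t\<bar> = 1" "\<bar>t - v\<bar> = 1" "\<bar>v - s\<bar> = 1"
    using assms(4-6) \<open>a \<noteq> b\<close> unfolding points dist_param by auto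
  with params show False
    by auto
qed

lemma dist_scaleR_scaleR:
  fixes x y :: "'a::real_normed_vector"
  shows "dist (c *\<^sub>R x) (c *\<^sub>R y) = \<bar>c\<bar> * dist x y"
  unfolding dist_norm scaleR_diff_right[symmetric] by simp

lemma common_vertex_same_label:
  assumes "\<epsilon> \<noteq> 0" "(i, j, k) \<in> tris" "(i', j', k') \<in> tris"
    and "v \<in> {\<epsilon> *\<^sub>R i, \<epsilon> *\<^sub>R j, \<epsilon> *\<^sub>R k}" "v \<in> {\<epsilon> *\<^sub>R i', \<epsilon> *\<^sub>R j', \<epsilon> *\<^sub>R k'}"
  shows "(v = \<epsilon> *\<^sub>R i \<and> i = i') \<or> (v = \<epsilon> *\<^sub>R j \<and> j = j') \<or> (v = \<epsilon> *\<^sub>R k \<and> k = k')"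
  using assms sublattices_disjoint by (auto simp: tris_def)

lemma share_side_common_vertices:
  assumes "\<epsilon> > 0" "(i, j, k) \<in> tris" "(i', j', k') \<in> tris"
    and "share_side \<epsilon> (i, j, k) (i', j', k')"
  obtains a b where "dist a b = \<epsilon>" "a \<noteq> b"
    "tri_hull \<epsilon> (i, j, k) \<inter> tri_hull \<epsilon> (i', j', k') = closed_segment a b"
    "a \<in> {\<epsilon> *\<^sub>R i, \<epsilon> *\<^sub>R j, \<epsilon> *\<^sub>R k}" "a \<in> {\<epsilon> *\<^sub>R i', \<epsilon> *\<^sub>R j', \<epsilon> *\<^sub>R k'}"
    "b \<in> {\<epsilon> *\<^sub>R i, \<epsilon> *\<^sub>R j, \<epsilon> *\<^sub>R k}" "b \<in> {\<epsilon> *\<^sub>R i', \<epsilon> *\<^sub>R j', \<epsilon> *\<^sub>R k'}"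
proof -
  obtain a b where seg: "tri_hull \<epsilon> (i, j, k) \<inter> tri_hull \<epsilon> (i', j', k') = closed_segment a b"
    and dist_ab: "dist a b = \<epsilon>"
    using assms(4) unfolding share_side_def by blast
  have vertex: "x \<in> {\<epsilon> *\<^sub>R p, \<epsilon> *\<^sub>R q, \<epsilon> *\<^sub>R r}"
    if "(p, q, r) \<in> tris" "x \<in> tri_hull \<epsilon> (p, q, r)" "y \<in> tri_hull \<epsilon> (p, q, r)" "dist x y = \<epsilon>"
    for p q r x y
    using that assms(1)
    by (intro far_point_of_equilateral_hull_is_vertex[where e = \<epsilon> and b = y])
      (auto simp: tris_def tri_hull_def dist_scaleR_scaleR)
  have ends: "a \<in> tri_hull \<epsilon> (i, j, k)" "b \<in> tri_hull \<epsilon> (i, j, k)"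
    "a \<in> tri_hull \<epsilon> (i', j', k')" "b \<in> tri_hull \<epsilon> (i', j', k')"
    using seg ends_in_segment[of a b] by blast+
  have dist_ba: "dist b a = \<epsilon>"
    using dist_ab by (simp add: dist_commute)
  show ?thesis
  proof (rule that[OF dist_ab _ seg])
    show "a \<noteq> b"
      using dist_ab assms(1) by auto
    show "a \<in> {\<epsilon> *\<^sub>R i, \<epsilon> *\<^sub>R j, \<epsilon> *\<^sub>R k}" "b \<in> {\<epsilon> *\<^sub>R i, \<epsilon> *\<^sub>R j, \<epsilon> *\<^sub>R k}"
      using vertex[OF assms(2) ends(1,2) dist_ab] vertex[OF assms(2) ends(2,1) dist_ba] .
    show "a \<in> {\<epsilon> *\<^sub>R i', \<epsilon> *\<^sub>R j', \<epsilon> *\<^sub>R k'}" "b \<in> {\<epsilon> *\<^sub>R i', \<epsilon> *\<^sub>R j', \<epsilon> *\<^sub>R k'}"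
      using vertex[OF assms(3) ends(3,4) dist_ab] vertex[OF assms(3) ends(4,3) dist_ba] .
  qed
qed

lemma share_side_labels_agree:
  assumes "\<epsilon> > 0" "(i, j, k) \<in> tris" "(i', j', k') \<in> tris"
    and "share_side \<epsilon> (i, j, k) (i', j', k')"
  shows "(i = i' \<and> j = j') \<or> (j = j' \<and> k = k') \<or> (k = k' \<and> i = i')"
proof -
  obtain a b where "a \<noteq> b"
    and "a \<in> {\<epsilon> *\<^sub>R i, \<epsilon> *\<^sub>R j, \<epsilon> *\<^sub>R k}" "a \<in> {\<epsilon> *\<^sub>R i', \<epsilon> *\<^sub>R j', \<epsilon> *\<^sub>R k'}"
    and "b \<in> {\<epsilon> *\<^sub>R i, \<epsilon> *\<^sub>R j, \<epsilon> *\<^sub>R k}" "b \<in> {\<epsilon> *\<^sub>R i', \<epsilon> *\<^sub>R j', \<epsilon> *\<^sub>R k'}"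
    using share_side_common_vertices[OF assms] by metis
  with common_vertex_same_label[OF _ assms(2,3)] assms(1) show ?thesis
    by (smt (verit))
qed

lemma not_share_side_self:
  assumes "\<epsilon> > 0" "t \<in> tris"
  shows "\<not> share_side \<epsilon> t t"
proof
  assume "share_side \<epsilon> t t"
  obtain i j k where t: "t = (i, j, k)"
    by (cases t)
  obtain a b where "dist a b = \<epsilon>" "a \<noteq> b" and "tri_hull \<epsilon> t = closed_segment a b"
    using share_side_common_vertices assms \<open>share_side \<epsilon> t t\<close> unfolding t by (metis Int_absorb)
  moreover have "{\<epsilon> *\<^sub>R i, \<epsilon> *\<^sub>R j, \<epsilon> *\<^sub>R k} \<subseteq> tri_hull \<epsilon> t"
    unfolding t tri_hull_def by (simp add: hull_subset)
  moreover have "dist (\<epsilon> *\<^sub>R i) (\<epsilon> *\<^sub>R j) = \<epsilon>" "dist (\<epsilon> *\<^sub>R j) (\<epsilon> *\<^sub>R k) = \<epsilon>"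
    "dist (\<epsilon> *\<^sub>R k) (\<epsilon> *\<^sub>R i) = \<epsilon>"
    using assms unfolding t by (auto simp: tris_def dist_scaleR_scaleR)
  ultimately show False
    using closed_segment_equilateral_triple_imp_eq[of "\<epsilon> *\<^sub>R i" a b "\<epsilon> *\<^sub>R j" "\<epsilon> *\<^sub>R k"]
    by auto
qed

definition cross_cycle :: "complex \<Rightarrow> complex \<Rightarrow> complex \<Rightarrow> real" where
  "cross_cycle x y z = cross x y + cross y z + cross z x"

lemma cross_cycle_eq_cross_diff: "cross_cycle x y z = cross (y - x) (z - x)"
  by (simp add: cross_cycle_def cross_def algebra_simps)

lemma cross_cycle_rotate: "cross_cycle y z x = cross_cycle x y z"
  by (simp add: cross_cycle_def)

lemma chi_eq_cross_cycle:
  "chi \<epsilon> u (i, j, k) = 2 / (3 * sqrt 3) * cross_cycle (u (\<epsilon> *\<^sub>R i)) (u (\<epsilon> *\<^sub>R j)) (u (\<epsilon> *\<^sub>R k))"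
  by (simp add: chi_def cross_cycle_def)

lemma energy_bound_if_inner_ge:
  fixes s c d :: "'a::real_inner"
  assumes "norm c = 1" "norm d = 1" "inner s c \<ge> (norm s)\<^sup>2 / 2"
  shows "(norm (s + c))\<^sup>2 + (norm (s + d))\<^sup>2 \<ge> 5 / 3"
proof -
  have expand: "(norm (s + z))\<^sup>2 = (norm s)\<^sup>2 + 1 + 2 * inner s z" if "norm z = 1" for z
    by (simp add: dot_norm[of s z] that field_simps)
  have "inner s d \<ge> - norm s"
    using Cauchy_Schwarz_ineq2[of s d] assms(2) by (simp add: abs_le_iff)
  moreover have "3 * (norm s)\<^sup>2 - 2 * norm s + 2 = 3 * (norm s - 1 / 3)\<^sup>2 + 5 / 3"
    by (simp add: power2_eq_square algebra_simps)
  ultimately show ?thesis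
    unfolding expand[OF assms(1)] expand[OF assms(2)]
    using assms(3) zero_le_power2[of "norm s - 1 / 3"] by linarith
qed

lemma unit_spins_energy_bound:
  fixes x y c d :: complex
  assumes "norm x = 1" "norm y = 1" "norm c = 1" "norm d = 1"
    and "cross_cycle x y c \<ge> 0" "cross_cycle x y d \<le> 0"
  shows "(norm (x + y + c))\<^sup>2 + (norm (x + y + d))\<^sup>2 \<ge> 5 / 3"
proof -
  define s w where "s = x + y" and "w = y - x"
  have coords: "(Re x)\<^sup>2 + (Im x)\<^sup>2 = 1" "(Re y)\<^sup>2 + (Im y)\<^sup>2 = 1"
    using assms(1,2) by (simp_all flip: cmod_power2)
  have orth: "inner s w = 0"
    using coords by (simp add: s_def w_def inner_complex_def power2_eq_square algebra_simps)
  define K where "K = cross w s"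
  have key: "(norm s)\<^sup>2 * cross w (z - x) = K * (inner s z - (norm s)\<^sup>2 / 2)" for z
    using orth unfolding K_def s_def w_def cmod_power2 inner_complex_def cross_def by simp algebra
  have K_sq: "K\<^sup>2 = (norm s)\<^sup>2 * (4 - (norm s)\<^sup>2)"
    using coords unfolding K_def s_def w_def cmod_power2 cross_def by simp algebra
  have chirality: "cross w (c - x) \<ge> 0" "cross w (d - x) \<le> 0"
    using assms(5,6) by (simp_all add: w_def cross_cycle_eq_cross_diff)
  have "inner s c \<ge> (norm s)\<^sup>2 / 2 \<or> inner s d \<ge> (norm s)\<^sup>2 / 2 \<or> norm s = 2"
    (is "?c_good \<or> ?d_good \<or> ?s_long")
  proof (cases K "0::real" rule: linorder_cases)
    case less
    have "K * (inner s d - (norm s)\<^sup>2 / 2) \<le> 0"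
      using chirality(2) by (simp flip: key add: mult_nonneg_nonpos)
    with less show ?thesis
      by (simp add: mult_le_0_iff)
  next
    case equal
    then have "norm s = 0 \<or> (norm s)\<^sup>2 = 2\<^sup>2"
      using K_sq by auto
    then show ?thesis
      using power2_eq_iff_nonneg[of "norm s" 2] by auto
  next
    case greater
    have "K * (inner s c - (norm s)\<^sup>2 / 2) \<ge> 0"
      using chirality(1) by (simp flip: key)
    with greater show ?thesis
      by (simp add: zero_le_mult_iff)
  qed
  then have "(norm (s + c))\<^sup>2 + (norm (s + d))\<^sup>2 \<ge> 5 / 3"
  proof (elim disjE)
    assume ?c_good
    then show ?thesis
      by (rule energy_bound_if_inner_ge[OF assms(3,4)])
  next
    assume ?d_good
    from energy_bound_if_inner_ge[OF assms(4,3) this] show ?thesis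
      by linarith
  next
    assume ?s_long
    then have "(norm (s + z))\<^sup>2 \<ge> 1" if "norm z = 1" for z
      using norm_diff_ineq[of s z] that by (intro one_le_power) simp
    from this[OF assms(3)] this[OF assms(4)] show ?thesis
      by linarith
  qed
  then show ?thesis
    by (simp add: s_def)
qed

lemma adjacent_spin_triples_energy_bound:
  fixes p q r p' q' r' :: complex
  assumes "norm p = 1" "norm q = 1" "norm r = 1" "norm p' = 1" "norm q' = 1" "norm r' = 1"
    and "cross_cycle p q r \<ge> 0" "cross_cycle p' q' r' \<le> 0"
    and "(p = p' \<and> q = q') \<or> (q = q' \<and> r = r') \<or> (r = r' \<and> p = p')"
  shows "(norm (p + q + r))\<^sup>2 + (norm (p' + q' + r'))\<^sup>2 \<ge> 5 / 3"
  using assms(9)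
proof (elim disjE conjE)
  assume "p = p'" "q = q'"
  then show ?thesis
    using unit_spins_energy_bound[of p q r r'] assms(1-8) by simp
next
  assume "q = q'" "r = r'"
  then show ?thesis
    using unit_spins_energy_bound[of q r p p'] assms(1-8) by (simp add: cross_cycle_rotate ac_simps)
next
  assume "r = r'" "p = p'"
  then show ?thesis
    using unit_spins_energy_bound[of r p q q'] assms(1-8) by (simp add: cross_cycle_rotate ac_simps)
qed

lemma adjacent_triangles_energy_bound:
  assumes "\<epsilon> > 0" "u \<in> SF \<epsilon>" "(i, j, k) \<in> tris" "(i', j', k') \<in> tris"
    and "share_side \<epsilon> (i, j, k) (i', j', k')"
    and "chi \<epsilon> u (i, j, k) \<ge> 0" "chi \<epsilon> u (i', j', k') \<le> 0"
  shows "Ftri \<epsilon> u (i, j, k) + Ftri \<epsilon> u (i', j', k') \<ge> 5 / 3 * \<epsilon>"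
proof -
  have unit: "norm (u (\<epsilon> *\<^sub>R x)) = 1" if "x \<in> Lat1 \<union> Lat2 \<union> Lat3" for x
    using assms(2) that sublattices_subset_Lat unfolding SF_def by blast
  have "5 / 3 \<le> (norm (u (\<epsilon> *\<^sub>R i) + u (\<epsilon> *\<^sub>R j) + u (\<epsilon> *\<^sub>R k)))\<^sup>2
      + (norm (u (\<epsilon> *\<^sub>R i') + u (\<epsilon> *\<^sub>R j') + u (\<epsilon> *\<^sub>R k')))\<^sup>2"
  proof (rule adjacent_spin_triples_energy_bound)
    show "norm (u (\<epsilon> *\<^sub>R i)) = 1" "norm (u (\<epsilon> *\<^sub>R j)) = 1" "norm (u (\<epsilon> *\<^sub>R k)) = 1"
      "norm (u (\<epsilon> *\<^sub>R i')) = 1" "norm (u (\<epsilon> *\<^sub>R j')) = 1" "norm (u (\<epsilon> *\<^sub>R k')) = 1"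
      using assms(3,4) by (auto simp: tris_def intro!: unit)
    show "cross_cycle (u (\<epsilon> *\<^sub>R i)) (u (\<epsilon> *\<^sub>R j)) (u (\<epsilon> *\<^sub>R k)) \<ge> 0"
      "cross_cycle (u (\<epsilon> *\<^sub>R i')) (u (\<epsilon> *\<^sub>R j')) (u (\<epsilon> *\<^sub>R k')) \<le> 0"
      using assms(6,7) by (simp_all add: chi_eq_cross_cycle zero_le_divide_iff divide_le_0_iff)
    show "(u (\<epsilon> *\<^sub>R i) = u (\<epsilon> *\<^sub>R i') \<and> u (\<epsilon> *\<^sub>R j) = u (\<epsilon> *\<^sub>R j'))
      \<or> (u (\<epsilon> *\<^sub>R j) = u (\<epsilon> *\<^sub>R j') \<and> u (\<epsilon> *\<^sub>R k) = u (\<epsilon> *\<^sub>R k'))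
      \<or> (u (\<epsilon> *\<^sub>R k) = u (\<epsilon> *\<^sub>R k') \<and> u (\<epsilon> *\<^sub>R i) = u (\<epsilon> *\<^sub>R i'))"
      using share_side_labels_agree[OF assms(1,3-5)] by auto
  qed
  then show ?thesis
    using assms(1) by (simp add: Ftri_def flip: distrib_left)
qed

theorem lemma3p2:
  fixes \<epsilon> :: real and u :: "complex \<Rightarrow> complex"
    and Tpos Tneg :: "complex \<times> complex \<times> complex"
  assumes "\<epsilon> > 0"
    and "u \<in> SF \<epsilon>"
    and "Tpos \<in> tris" and "Tneg \<in> tris"
    and "share_side \<epsilon> Tpos Tneg"
    and "chi \<epsilon> u Tpos \<ge> 0" and "chi \<epsilon> u Tneg \<le> 0"
  shows "F \<epsilon> u (tri_hull \<epsilon> Tpos \<union> tri_hull \<epsilon> Tneg) \<ge> 5 / 3 * \<epsilon>"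
proof -
  have "5 / 3 * \<epsilon> \<le> Ftri \<epsilon> u Tpos + Ftri \<epsilon> u Tneg"
    using adjacent_triangles_energy_bound assms by (metis prod_cases3)
  also have "\<dots> = (\<Sum>t\<in>{Tpos, Tneg}. Ftri \<epsilon> u t)"
    using not_share_side_self[OF assms(1,3)] assms(5) by (cases "Tpos = Tneg") simp_all
  also have "\<dots> \<le> F \<epsilon> u (tri_hull \<epsilon> Tpos \<union> tri_hull \<epsilon> Tneg)"
    using assms(1,3,4) by (intro sum_Ftri_le_F) (auto simp: bounded_tri_hull)
  finally show ?thesis .
qed

end
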